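(* Let $A\subset\mathbf{Z}_{\geq0}$ be finite with $0\in A$, $N=\#A\geq2$, $A(x)=\sum_{a\in A}x^a$, and suppose $A(x)$ has a spectrum $\{\theta_1,\dots,\theta_{N-1}\}$; set $\theta_0=0$ and $\epsilon_{ij}=e^{2\pi i(\theta_i-\theta_j)}$. If the number of distinct roots of $A(x)$ on the unit circle is less than $\frac{3N}{2}-1$, then $G=\{\epsilon_{ij}: 0\leq i,j\leq N-1\}$ is a multiplicative group, and it equals the group of all $N$-th roots of unity.
   Context: A set $\{\theta_1,\dots,\theta_{N-1}\}\subset(0,1)$ is called a spectrum for $A(x)$ if the $\theta_j$ are pairwise distinct and, with $\theta_0=0$, $A(e^{2\pi i(\theta_i-\theta_j)})=0$ for all $0\leq i,j\leq N-1$ with $i\neq j$. *)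

theory Defs
  imports "HOL-Analysis.Analysis"
begin

definition genfun :: "nat set \<Rightarrow> complex \<Rightarrow> complex" where
  "genfun A x = (\<Sum>a\<in>A. x ^ a)"

definition eps :: "(nat \<Rightarrow> real) \<Rightarrow> nat \<Rightarrow> nat \<Rightarrow> complex" where
  "eps \<theta> i j = exp (2 * pi * \<i> * complex_of_real (\<theta> i - \<theta> j))"

definition is_spectrum :: "nat set \<Rightarrow> (nat \<Rightarrow> real) \<Rightarrow> bool" where
  "is_spectrum A \<theta> \<longleftrightarrow>
     (let N = card A in
       \<theta> 0 = 0 \<and>
       (\<forall>j\<in>{1..<N}. 0 < \<theta> j \<and> \<theta> j < 1) \<and>
       inj_on \<theta> {1..<N} \<and>
       (\<forall>i<N. \<forall>j<N. i \<noteq> j \<longrightarrow> genfun A (eps \<theta> i j) = 0))"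

end

theory Submission
  imports Defs
begin

text \<open>
  Put \<open>u\<^sub>i = exp (2 \<pi> i \<theta>\<^sub>i)\<close> and \<open>T = {u\<^sub>i | i < N}\<close>, so that \<open>G = T/T\<close>. Since
  \<open>A(1) = N \<noteq> 0\<close> the \<open>u\<^sub>i\<close> are distinct, and every element of \<open>G\<close> other than 1 is a root of
  \<open>A\<close> on the unit circle, so \<open>|T/T| < 3|T|/2\<close>. Counting shows that each \<open>z \<in> T/T\<close> is
  then a quotient \<open>dz / d\<close> with \<open>d, dz \<in> T\<close> for more than half of all \<open>d \<in> T\<close>; two such
  half-sets intersect, so \<open>T/T\<close> is closed under division, i.e. a finite subgroup of \<open>\<complex>\<^sup>*\<close>,
  hence the group of \<open>M\<close>-th roots of unity with \<open>M = |G| \<ge> N\<close>. Summing \<open>A\<close> over \<open>G\<close> gives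
  \<open>A(1) = N\<close> on the one hand, and \<open>M\<close> times the number of \<open>a \<in> A\<close> with \<open>M dvd a\<close>, at
  least \<open>M\<close> as \<open>0 \<in> A\<close>, on the other; so \<open>M = N\<close>.
\<close>

definition quotient_set :: "'a::field set \<Rightarrow> 'a set" where
  "quotient_set T = {a / b | a b. a \<in> T \<and> b \<in> T}"

lemma quotient_set_eq_image: "quotient_set T = (\<lambda>(a, b). a / b) ` (T \<times> T)"
  unfolding quotient_set_def by auto

lemma finite_quotient_set: "finite T \<Longrightarrow> finite (quotient_set T)"
  unfolding quotient_set_eq_image by simp

lemma zero_notin_quotient_set: "0 \<notin> T \<Longrightarrow> 0 \<notin> quotient_set T"
  unfolding quotient_set_def by auto

lemma one_in_quotient_set:
  assumes "0 \<notin> T" and "t \<in> T"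
  shows "1 \<in> quotient_set T"
  using assms unfolding quotient_set_def by (intro CollectI exI[of _ t]) auto

lemma inverse_in_quotient_set:
  assumes "x \<in> quotient_set T"
  shows "inverse x \<in> quotient_set T"
proof -
  obtain a b where "a \<in> T" "b \<in> T" "x = a / b" using assms unfolding quotient_set_def by blast
  then show ?thesis unfolding quotient_set_def by (auto simp: inverse_divide)
qed

lemma card_le_card_quotient_set:
  assumes "finite T" and "0 \<notin> T" and "t \<in> T"
  shows "card T \<le> card (quotient_set T)"
proof (rule card_inj_on_le)
  show "inj_on (\<lambda>a. a / t) T" using assms(2,3) by (auto simp: inj_on_def)
  show "(\<lambda>a. a / t) ` T \<subseteq> quotient_set T" using assms(3) unfolding quotient_set_def by auto
qed (use assms(1) finite_quotient_set in blast)

lemma card_representations_quotient_set: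
  assumes fin: "finite T" and nz: "0 \<notin> T" and z: "z \<in> quotient_set T"
  shows "2 * card T \<le> card (quotient_set T) + card {d \<in> T. d * z \<in> T}"
proof -
  obtain s t where st: "s \<in> T" "t \<in> T" "z = s / t" using z unfolding quotient_set_def by auto
  have s0: "s \<noteq> 0" and t0: "t \<noteq> 0" using st nz by auto
  define X where "X = (\<lambda>c. c / s) ` T"
  define Y where "Y = (\<lambda>c. c / t) ` T"
  have "card X = card T" unfolding X_def by (rule card_image) (auto simp: inj_on_def s0)
  moreover have "card Y = card T" unfolding Y_def by (rule card_image) (auto simp: inj_on_def t0)
  moreover have "card X + card Y = card (X \<union> Y) + card (X \<inter> Y)"
    unfolding X_def Y_def using fin by (intro card_Un_Int) auto
  moreover have "card (X \<union> Y) \<le> card (quotient_set T)"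
    using st finite_quotient_set[OF fin] unfolding X_def Y_def
    by (intro card_mono) (auto simp: quotient_set_def)
  moreover have "card (X \<inter> Y) \<le> card {d \<in> T. d * z \<in> T}"
  proof (rule card_inj_on_le)
    show "inj_on (\<lambda>w. w * t) (X \<inter> Y)" using t0 by (auto simp: inj_on_def)
    show "(\<lambda>w. w * t) ` (X \<inter> Y) \<subseteq> {d \<in> T. d * z \<in> T}"
    proof
      fix v assume "v \<in> (\<lambda>w. w * t) ` (X \<inter> Y)"
      then obtain c d where "c \<in> T" "d \<in> T" "c / s = d / t" "v = d / t * t"
        unfolding X_def Y_def by auto
      with s0 t0 have "v = d" and "v * z = c" unfolding st(3) by (simp_all add: field_simps)
      with \<open>c \<in> T\<close> \<open>d \<in> T\<close> show "v \<in> {d \<in> T. d * z \<in> T}" by simp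
    qed
  qed (use fin in simp)
  ultimately show ?thesis by linarith
qed

lemma quotient_set_divide_closed:
  assumes fin: "finite T" and nz: "0 \<notin> T"
    and small: "2 * card (quotient_set T) < 3 * card T"
    and x: "x \<in> quotient_set T" and y: "y \<in> quotient_set T"
  shows "x / y \<in> quotient_set T"
proof -
  let ?R = "\<lambda>z. {d \<in> T. d * z \<in> T}"
  have "?R x \<inter> ?R y \<noteq> {}"
  proof
    assume "?R x \<inter> ?R y = {}"
    hence "card (?R x) + card (?R y) = card (?R x \<union> ?R y)"
      using fin by (intro card_Un_disjoint[symmetric]) auto
    also have "\<dots> \<le> card T" using fin by (intro card_mono) auto
    finally show False
      using card_representations_quotient_set[OF fin nz x]
            card_representations_quotient_set[OF fin nz y] small by linarith
  qed
  then obtain d where d: "d \<in> T" "d * x \<in> T" "d * y \<in> T" by auto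
  with nz have "x / y = (d * x) / (d * y)" by (cases "d = 0") auto
  with d show ?thesis unfolding quotient_set_def by blast
qed

lemma quotient_set_mult_closed:
  assumes "finite T" and "0 \<notin> T" and "2 * card (quotient_set T) < 3 * card T"
    and "x \<in> quotient_set T" and "y \<in> quotient_set T"
  shows "x * y \<in> quotient_set T"
  using quotient_set_divide_closed[OF assms(1-4) inverse_in_quotient_set[OF assms(5)]]
  by (simp add: divide_inverse)

lemma mult_closed_translate_eq:
  fixes G :: "'a::field set"
  assumes fin: "finite G" and nz: "0 \<notin> G"
    and closed: "\<And>x y. x \<in> G \<Longrightarrow> y \<in> G \<Longrightarrow> x * y \<in> G" and g: "g \<in> G"
  shows "(*) g ` G = G" and "inj_on ((*) g) G"
proof -
  show inj: "inj_on ((*) g) G" using g nz by (auto simp: inj_on_def)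
  show "(*) g ` G = G"
    using fin closed g card_image[OF inj] by (intro card_subset_eq) auto
qed

lemma power_card_mult_closed:
  fixes G :: "'a::field set"
  assumes fin: "finite G" and nz: "0 \<notin> G"
    and closed: "\<And>x y. x \<in> G \<Longrightarrow> y \<in> G \<Longrightarrow> x * y \<in> G" and g: "g \<in> G"
  shows "g ^ card G = 1"
proof -
  note translate = mult_closed_translate_eq[OF fin nz closed g]
  have "\<Prod>G = (\<Prod>z\<in>(*) g ` G. z)" using translate(1) by simp
  also have "\<dots> = (\<Prod>z\<in>G. g * z)" by (simp add: prod.reindex[OF translate(2)])
  also have "\<dots> = g ^ card G * \<Prod>G" by (simp add: prod.distrib)
  finally show ?thesis using fin nz by simp
qed

lemma mult_closed_eq_roots_unity:
  fixes G :: "complex set"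
  assumes "finite G" and "0 \<notin> G" and "G \<noteq> {}"
    and "\<And>x y. x \<in> G \<Longrightarrow> y \<in> G \<Longrightarrow> x * y \<in> G"
  shows "G = {z. z ^ card G = 1}"
proof -
  have "card G > 0" using assms(1,3) by (simp add: card_gt_0_iff)
  then show ?thesis
    using power_card_mult_closed[OF assms(1,2,4)]
    by (intro card_subset_eq finite_roots_unity) (auto simp: card_roots_unity_eq)
qed

lemma quotient_set_eq_roots_unity:
  fixes T :: "complex set"
  assumes "finite T" and "0 \<notin> T" and "t \<in> T"
    and "2 * card (quotient_set T) < 3 * card T"
  shows "quotient_set T = {z. z ^ card (quotient_set T) = 1}"
proof (rule mult_closed_eq_roots_unity)
  show "finite (quotient_set T)" using assms(1) by (rule finite_quotient_set)
  show "0 \<notin> quotient_set T" using assms(2) by (rule zero_notin_quotient_set)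
  show "quotient_set T \<noteq> {}" using one_in_quotient_set[OF assms(2,3)] by blast
  show "x * y \<in> quotient_set T" if "x \<in> quotient_set T" and "y \<in> quotient_set T" for x y
    using quotient_set_mult_closed[OF assms(1,2,4) that] .
qed

text \<open>If some \<open>g \<in> G\<close> has \<open>g ^ a \<noteq> 1\<close>, the sum is invariant under multiplication by \<open>g ^ a\<close>.\<close>
lemma sum_power_mult_closed:
  fixes G :: "'a::field set"
  assumes fin: "finite G" and nz: "0 \<notin> G"
    and closed: "\<And>x y. x \<in> G \<Longrightarrow> y \<in> G \<Longrightarrow> x * y \<in> G"
  shows "(\<Sum>z\<in>G. z ^ a) = (if \<forall>z\<in>G. z ^ a = 1 then of_nat (card G) else 0)"
proof (cases "\<forall>z\<in>G. z ^ a = 1")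
  case False
  then obtain g where g: "g \<in> G" "g ^ a \<noteq> 1" by auto
  note translate = mult_closed_translate_eq[OF fin nz closed g(1)]
  have "(\<Sum>z\<in>G. z ^ a) = (\<Sum>z\<in>(*) g ` G. z ^ a)" using translate(1) by simp
  also have "\<dots> = (\<Sum>z\<in>G. (g * z) ^ a)" by (simp add: sum.reindex[OF translate(2)])
  also have "\<dots> = g ^ a * (\<Sum>z\<in>G. z ^ a)" by (simp add: power_mult_distrib sum_distrib_left)
  finally have "(g ^ a - 1) * (\<Sum>z\<in>G. z ^ a) = 0" by (simp add: algebra_simps)
  with g(2) show ?thesis by (subst if_not_P[OF False]) simp
qed simp

lemma genfun_one: "genfun A 1 = of_nat (card A)"
  unfolding genfun_def by simp

lemma finite_genfun_zeros:
  assumes "finite A" and "k \<in> A"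
  shows "finite {z. genfun A z = 0}"
proof -
  define c where "c i = (if i \<in> A then 1 else 0 :: complex)" for i
  have "genfun A z = (\<Sum>i\<le>Max A. c i * z ^ i)" for z
  proof -
    have "(\<Sum>i\<le>Max A. c i * z ^ i) = (\<Sum>i\<in>{..Max A} \<inter> A. z ^ i)"
      unfolding c_def by (subst sum.inter_restrict) (auto intro: sum.cong)
    also have "{..Max A} \<inter> A = A" using assms(1) by auto
    finally show ?thesis unfolding genfun_def by simp
  qed
  moreover have "c k \<noteq> 0" and "k \<le> Max A" using assms by (auto simp: c_def)
  ultimately show ?thesis using polyfun_rootbound[where c = c and n = "Max A"] by auto
qed

lemma card_le_card_of_genfun_vanishing:
  fixes G :: "complex set"
  assumes A: "finite A" "0 \<in> A"
    and G: "finite G" "0 \<notin> G" "1 \<in> G" "\<And>x y. x \<in> G \<Longrightarrow> y \<in> G \<Longrightarrow> x * y \<in> G"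
    and vanish: "\<And>z. z \<in> G \<Longrightarrow> z \<noteq> 1 \<Longrightarrow> genfun A z = 0"
  shows "card G \<le> card A"
proof -
  let ?S = "{a \<in> A. \<forall>z\<in>G. z ^ a = 1}"
  have "of_nat (card A) = (\<Sum>z\<in>G. genfun A z)"
    using G(1,3) vanish by (simp add: sum.remove genfun_one)
  also have "\<dots> = (\<Sum>a\<in>A. \<Sum>z\<in>G. z ^ a)"
    unfolding genfun_def by (rule sum.swap)
  also have "\<dots> = (\<Sum>a\<in>A. if a \<in> ?S then of_nat (card G) else 0)"
    using A(1) by (intro sum.cong) (simp_all add: sum_power_mult_closed[OF G(1,2,4)])
  also have "\<dots> = of_nat (card G * card ?S)"
    using A(1) by (simp add: sum.If_cases Int_def)
  finally have "card A = card G * card ?S" by (simp only: of_nat_eq_iff)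
  moreover have "card ?S \<ge> 1" using A card_mono[of ?S "{0}"] by auto
  ultimately show ?thesis by simp
qed

definition circle_point :: "real \<Rightarrow> complex" where
  "circle_point t = exp (2 * pi * \<i> * complex_of_real t)"

lemma circle_point_nonzero [simp]: "circle_point t \<noteq> 0"
  unfolding circle_point_def by simp

lemma eps_eq_divide: "eps \<theta> i j = circle_point (\<theta> i) / circle_point (\<theta> j)"
  unfolding eps_def circle_point_def by (simp add: exp_diff[symmetric] algebra_simps)

lemma norm_eps: "cmod (eps \<theta> i j) = 1"
  unfolding eps_def by (simp add: norm_exp_eq_Re)

lemma eps_self [simp]: "eps \<theta> i i = 1"
  unfolding eps_def by simp

lemma spectrum_eps_root:
  assumes "is_spectrum A \<theta>" and "i < card A" and "j < card A" and "i \<noteq> j"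
  shows "genfun A (eps \<theta> i j) = 0"
  using assms unfolding is_spectrum_def Let_def by blast

lemma spectrum_inj_circle_point:
  assumes "is_spectrum A \<theta>" and "card A \<ge> 1"
  shows "inj_on (\<lambda>i. circle_point (\<theta> i)) {..<card A}"
proof (rule inj_onI, rule ccontr)
  fix i j assume ij: "i \<in> {..<card A}" "j \<in> {..<card A}"
    "circle_point (\<theta> i) = circle_point (\<theta> j)" "i \<noteq> j"
  then have "eps \<theta> i j = 1" by (simp add: eps_eq_divide)
  moreover have "genfun A (eps \<theta> i j) = 0" using spectrum_eps_root[OF assms(1)] ij by simp
  ultimately show False using assms(2) by (simp add: genfun_one)
qed

lemma spectrum_eps_set_subset:
  assumes "is_spectrum A \<theta>"
  shows "{eps \<theta> i j | i j. i < card A \<and> j < card A} \<subseteq> insert 1 {z. cmod z = 1 \<and> genfun A z = 0}"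
  using spectrum_eps_root[OF assms] norm_eps by (auto, metis eps_self)

theorem mainTheorem13:
  fixes A :: "nat set" and \<theta> :: "nat \<Rightarrow> real"
  assumes "finite A" and "0 \<in> A" and "card A \<ge> 2"
    and "is_spectrum A \<theta>"
    and "real (card {z. cmod z = 1 \<and> genfun A z = 0}) < 3 * real (card A) / 2 - 1"
  shows "(let G = {eps \<theta> i j | i j. i < card A \<and> j < card A} in
           1 \<in> G \<and> (\<forall>x\<in>G. \<forall>y\<in>G. x * y \<in> G) \<and> (\<forall>x\<in>G. inverse x \<in> G)
           \<and> G = {z. z ^ card A = 1})"
proof -
  define N where "N = card A"
  define T where "T = (\<lambda>i. circle_point (\<theta> i)) ` {..<N}"
  define Z where "Z = {z. cmod z = 1 \<and> genfun A z = 0}"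
  let ?G = "{eps \<theta> i j | i j. i < N \<and> j < N}"
  have G: "?G = quotient_set T" unfolding T_def quotient_set_def eps_eq_divide by blast
  have finT: "finite T" and T0: "0 \<notin> T" and t0: "circle_point (\<theta> 0) \<in> T"
    using assms(3) unfolding T_def N_def by auto
  have cardT: "card T = N"
    unfolding T_def N_def using assms(3,4) by (simp add: card_image spectrum_inj_circle_point)
  have sub: "quotient_set T \<subseteq> insert 1 Z"
    unfolding G[symmetric] N_def Z_def by (rule spectrum_eps_set_subset[OF assms(4)])
  have finZ: "finite Z"
    using finite_genfun_zeros[OF assms(1,2)] unfolding Z_def by (rule finite_subset[rotated]) auto
  have "card (quotient_set T) \<le> card (insert 1 Z)" using sub finZ by (intro card_mono) auto
  also have "\<dots> \<le> card Z + 1" using finZ by (simp add: card_insert_if)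
  finally have small: "2 * card (quotient_set T) < 3 * card T"
    using assms(5) unfolding Z_def N_def cardT by linarith
  note one = one_in_quotient_set[OF T0 t0] and inv = inverse_in_quotient_set
    and mul = quotient_set_mult_closed[OF finT T0 small]
    and roots = quotient_set_eq_roots_unity[OF finT T0 t0 small]
  have vanish: "genfun A z = 0" if "z \<in> quotient_set T" and "z \<noteq> 1" for z
    using sub that unfolding Z_def by blast
  have "card (quotient_set T) \<le> N"
    using card_le_card_of_genfun_vanishing[OF assms(1,2) finite_quotient_set[OF finT]
        zero_notin_quotient_set[OF T0] one mul vanish] N_def by simp
  moreover have "N \<le> card (quotient_set T)" using card_le_card_quotient_set[OF finT T0 t0] cardT by simp
  ultimately have "quotient_set T = {z. z ^ N = 1}" using roots by simp
  with one inv mul show ?thesis unfolding Let_def N_def[symmetric] G by blast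
qed

end
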